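(* Let $\mathbf{T}$ be the dappled triangular grid. For any vertex $v$ of $\mathbf{T}$, if $u_1$ and $u_2$ are distinct neighbors of $v$, then $(\psi_{\mathbf{T}}(u_1),\varphi_{\mathbf{T}}(u_1))\neq(\psi_{\mathbf{T}}(u_2),\varphi_{\mathbf{T}}(u_2))$. Consequently, for any connected dappled graph $G$ and any vertex $x\in V(G)$, if $f_1,f_2:V(G)\to V(\mathbf{T})$ are homomorphisms of dappled graphs with $f_1(x)=f_2(x)$, then $f_1=f_2$.
   Context: A hued graph is a graph $G$ together with a proper coloring $\psi_G:V(G)\to\mathbb{Z}_3$ (the hue). A dappled graph is a hued graph $G$ together with a proper coloring $\varphi_G:V(G)\to\mathbb{Z}_2^2$ (the color). A homomorphism of dappled graphs $f:V(G)\to V(H)$ maps edges to edges and satisfies $\psi_H(f(v))=\psi_G(v)$ and $\varphi_H(f(v))=\varphi_G(v)$ for all $v$. The dappled triangular grid $\mathbf{T}$ has vertex set $\mathbb{Z}^2$, with $(i_1,j_1)$ and $(i_2,j_2)$ adjacent iff $(i_2-i_1,j_2-j_1)\in\{\pm(1,0),\pm(0,1),\pm(1,1)\}$, hue $\psi_{\mathbf{T}}(i,j)=(i+j)\bmod 3$ and color $\varphi_{\mathbf{T}}(i,j)=(i\bmod 2, j\bmod 2)$. *)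

theory Defs
  imports Main "HOL-Library.Numeral_Type"
begin

definition dappled_graph ::
  "'a set \<Rightarrow> ('a \<Rightarrow> 'a \<Rightarrow> bool) \<Rightarrow> ('a \<Rightarrow> 3) \<Rightarrow> ('a \<Rightarrow> 2 \<times> 2) \<Rightarrow> bool" where
  "dappled_graph V E psi phi \<longleftrightarrow>
     (\<forall>x y. E x y \<longrightarrow> x \<in> V \<and> y \<in> V) \<and>
     (\<forall>x y. E x y \<longrightarrow> E y x) \<and>
     (\<forall>x. \<not> E x x) \<and>
     (\<forall>x y. E x y \<longrightarrow> psi x \<noteq> psi y) \<and>
     (\<forall>x y. E x y \<longrightarrow> phi x \<noteq> phi y)"

definition graph_connected :: "'a set \<Rightarrow> ('a \<Rightarrow> 'a \<Rightarrow> bool) \<Rightarrow> bool" where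
  "graph_connected V E \<longleftrightarrow> V \<noteq> {} \<and> (\<forall>x\<in>V. \<forall>y\<in>V. E\<^sup>*\<^sup>* x y)"

definition dappled_hom ::
  "'a set \<Rightarrow> ('a \<Rightarrow> 'a \<Rightarrow> bool) \<Rightarrow> ('a \<Rightarrow> 3) \<Rightarrow> ('a \<Rightarrow> 2 \<times> 2) \<Rightarrow>
   'b set \<Rightarrow> ('b \<Rightarrow> 'b \<Rightarrow> bool) \<Rightarrow> ('b \<Rightarrow> 3) \<Rightarrow> ('b \<Rightarrow> 2 \<times> 2) \<Rightarrow>
   ('a \<Rightarrow> 'b) \<Rightarrow> bool" where
  "dappled_hom VG EG psiG phiG VH EH psiH phiH f \<longleftrightarrow>
     (\<forall>v\<in>VG. f v \<in> VH) \<and>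
     (\<forall>u v. EG u v \<longrightarrow> EH (f u) (f v)) \<and>
     (\<forall>v\<in>VG. psiH (f v) = psiG v \<and> phiH (f v) = phiG v)"

definition T_adj :: "int \<times> int \<Rightarrow> int \<times> int \<Rightarrow> bool" where
  "T_adj p q \<longleftrightarrow> (fst q - fst p, snd q - snd p) \<in>
     {(1,0), (-1,0), (0,1), (0,-1), (1,1), (-1,-1)}"

definition T_hue :: "int \<times> int \<Rightarrow> 3" where
  "T_hue p = of_int (fst p + snd p)"

definition T_color :: "int \<times> int \<Rightarrow> 2 \<times> 2" where
  "T_color p = (of_int (fst p), of_int (snd p))"

end

theory Submission
  imports Defs
begin

text \<open>Write \<open>u = v + d\<close> for a neighbour \<open>u\<close> of \<open>v\<close>. Hue and colour of \<open>u\<close> determine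
  \<open>d\<^sub>1 + d\<^sub>2\<close> modulo 3 and \<open>d\<^sub>1, d\<^sub>2\<close> modulo 2, and these residues already separate
  the six offsets \<open>\<plusminus>(1,0), \<plusminus>(0,1), \<plusminus>(1,1)\<close>. Hence a label-preserving homomorphism into
  the grid that is known at one vertex is forced at each neighbour, and by connectedness
  everywhere.\<close>

lemma (in ring_1) of_int_eq_iff_CHAR_dvd:
  "(of_int m = (of_int n :: 'a)) \<longleftrightarrow> int CHAR('a) dvd m - n"
  by (metis of_int_diff of_int_eq_0_iff_char_dvd right_minus_eq)

lemma T_hue_eq_iff: "T_hue p = T_hue q \<longleftrightarrow> 3 dvd (fst p + snd p) - (fst q + snd q)"
  unfolding T_hue_def of_int_eq_iff_CHAR_dvd by simp

lemma T_color_eq_iff: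
  "T_color p = T_color q \<longleftrightarrow> even (fst p - fst q) \<and> even (snd p - snd q)"
  by (simp add: T_color_def of_int_eq_iff_CHAR_dvd)

lemma T_adj_offsets_separated:
  fixes d e :: "int \<times> int"
  assumes "d \<in> {(1,0), (-1,0), (0,1), (0,-1), (1,1), (-1,-1)}"
    and "e \<in> {(1,0), (-1,0), (0,1), (0,-1), (1,1), (-1,-1)}"
    and "3 dvd (fst d + snd d) - (fst e + snd e)" "even (fst d - fst e)" "even (snd d - snd e)"
  shows "d = e"
  using assms by auto

lemma T_adj_same_label_eq:
  assumes "T_adj v u1" "T_adj v u2" "T_hue u1 = T_hue u2" "T_color u1 = T_color u2"
  shows "u1 = u2"
proof -
  define d where "d u = (fst u - fst v, snd u - snd v)" for u
  have "d u1 = d u2"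
  proof (rule T_adj_offsets_separated)
    show "d u1 \<in> {(1,0), (-1,0), (0,1), (0,-1), (1,1), (-1,-1)}"
      "d u2 \<in> {(1,0), (-1,0), (0,1), (0,-1), (1,1), (-1,-1)}"
      using assms(1,2) by (simp_all add: d_def T_adj_def)
    show "3 dvd (fst (d u1) + snd (d u1)) - (fst (d u2) + snd (d u2))"
      using assms(3) by (simp add: d_def T_hue_eq_iff algebra_simps)
    show "even (fst (d u1) - fst (d u2))" "even (snd (d u1) - snd (d u2))"
      using assms(4) by (simp_all add: d_def T_color_eq_iff)
  qed
  then show ?thesis by (simp add: d_def prod_eq_iff)
qed

lemma dappled_hom_eq_if_eq_at:
  assumes G: "dappled_graph V E psi phi" "graph_connected V E"
    and rainbow: "\<And>w u1 u2. EH w u1 \<Longrightarrow> EH w u2 \<Longrightarrow> psiH u1 = psiH u2 \<Longrightarrow> phiH u1 = phiH u2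
      \<Longrightarrow> u1 = u2"
    and f1: "dappled_hom V E psi phi VH EH psiH phiH f1"
    and f2: "dappled_hom V E psi phi VH EH psiH phiH f2"
    and "x \<in> V" "f1 x = f2 x" "v \<in> V"
  shows "f1 v = f2 v"
proof -
  have "E\<^sup>*\<^sup>* x v"
    using G(2) \<open>x \<in> V\<close> \<open>v \<in> V\<close> by (simp add: graph_connected_def)
  then show ?thesis
  proof (induction rule: rtranclp_induct)
    case base
    show ?case by fact
  next
    case (step y z)
    have "z \<in> V"
      using G(1) \<open>E y z\<close> by (simp add: dappled_graph_def)
    have "EH (f2 y) (f1 z)" "EH (f2 y) (f2 z)"
      using f1 f2 \<open>E y z\<close> \<open>f1 y = f2 y\<close> unfolding dappled_hom_def by metis+
    moreover have "psiH (f1 z) = psiH (f2 z)" "phiH (f1 z) = phiH (f2 z)"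
      using f1 f2 \<open>z \<in> V\<close> by (simp_all add: dappled_hom_def)
    ultimately show ?case by (rule rainbow)
  qed
qed

theorem mainTheorem3:
  shows "(\<forall>v u1 u2. T_adj v u1 \<and> T_adj v u2 \<and> u1 \<noteq> u2 \<longrightarrow>
            (T_hue u1, T_color u1) \<noteq> (T_hue u2, T_color u2)) \<and>
         (\<forall>(V :: 'a set) E psi phi x f1 f2.
            dappled_graph V E psi phi \<and> graph_connected V E \<and> x \<in> V \<and>
            dappled_hom V E psi phi UNIV T_adj T_hue T_color f1 \<and>
            dappled_hom V E psi phi UNIV T_adj T_hue T_color f2 \<and>
            f1 x = f2 x \<longrightarrow> (\<forall>v\<in>V. f1 v = f2 v))"
proof (intro conjI allI impI ballI)
  fix v u1 u2
  assume "T_adj v u1 \<and> T_adj v u2 \<and> u1 \<noteq> u2"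
  then show "(T_hue u1, T_color u1) \<noteq> (T_hue u2, T_color u2)"
    using T_adj_same_label_eq[of v u1 u2] by auto
next
  fix V :: "'a set" and E psi phi x f1 f2 v
  assume "dappled_graph V E psi phi \<and> graph_connected V E \<and> x \<in> V \<and>
    dappled_hom V E psi phi UNIV T_adj T_hue T_color f1 \<and>
    dappled_hom V E psi phi UNIV T_adj T_hue T_color f2 \<and> f1 x = f2 x"
    and "v \<in> V"
  then show "f1 v = f2 v"
    by (elim conjE) (rule dappled_hom_eq_if_eq_at[OF _ _ T_adj_same_label_eq])
qed
end
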